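(* Let $\Omega\subset\mathbb{R}^n$ ($n\ge1$) be a bounded domain, $T>0$, $\delta\in(0,1)\cup(1,2)$, $\bar Q:=\bar\Omega\times[0,T]$ and $Q:=\Omega\times(0,T]$. Let $u$ be a classical solution of the initial-boundary value problem described in the context. Assume that $\partial^{\bar\delta}u(x,t)/\partial t^{\bar\delta}$ is continuous on $\bar Q$. Then \[ \lim_{t\to0^+} D_t^\delta u(x,t)=0\quad\text{for each } x\in\Omega . \]
   Context: Set $\bar\delta=1$ if $0<\delta<1$ and $\bar\delta=2$ if $1<\delta<2$. The Caputo fractional derivative is \[ D_t^\delta g(x,t):=\frac{1}{\Gamma(\bar\delta-\delta)}\int_0^t (t-s)^{\bar\delta-\delta-1}\,\frac{\partial^{\bar\delta}g(x,s)}{\partial s^{\bar\delta}}\,ds,\qquad x\in\Omega,\ 0<t\le T. \] The problem is: $D_t^\delta u-\sum_{i,j=1}^n p_{ij}(x,t)\,\partial^2u/\partial x_i\partial x_j+\sum_{i=1}^n q_i(x,t)\,\partial u/\partial x_i+r(x,t)u=f(x,t)$ for $(x,t)\in Q$; $u(x,t)=\psi(x,t)$ for $(x,t)\in\partial\Omega\times(0,T]$; $u(x,0)=\phi_0(x)$ for $x\in\bar\Omega$; and, only when $1<\delta<2$, $u_t(x,0)=\phi_1(x)$ for $x\in\Omega$. The spatial operator $w\mapsto\sum p_{ij}\partial^2w/\partial x_i\partial x_j+\sum q_i\partial w/\partial x_i+rw$ is uniformly elliptic on $Q$; $p_{ij},q_i,r,\psi,\phi_0,\phi_1$ are continuous on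 the closures of their domains; and $\phi_0(x)=\psi(x,0)$ for all $x\in\partial\Omega$. A classical solution is a function $u$ continuous on $\bar Q$ for which $D_t^\delta u$, $\partial u/\partial x_i$, $\partial^2u/\partial x_i\partial x_j$ exist at every point of $Q$ and the equation and the initial and boundary conditions hold pointwise. *)

theory Defs
  imports "HOL-Analysis.Analysis"
begin

definition delta_bar :: "real \<Rightarrow> nat" where
  "delta_bar \<delta> = (if \<delta> < 1 then 1 else 2)"

definition tder :: "nat \<Rightarrow> (real \<Rightarrow> real) \<Rightarrow> real \<Rightarrow> real" where
  "tder k g s = (deriv ^^ k) g s"

definition tder_exists :: "nat \<Rightarrow> (real \<Rightarrow> real) \<Rightarrow> real \<Rightarrow> bool" where
  "tder_exists k g s =
     (if k = 1 then g differentiable (at s)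
      else (\<forall>\<^sub>F r in nhds s. g differentiable (at r)) \<and> deriv g differentiable (at s))"

definition caputo :: "real \<Rightarrow> ('x \<Rightarrow> real \<Rightarrow> real) \<Rightarrow> 'x \<Rightarrow> real \<Rightarrow> real" where
  "caputo \<delta> u x t =
     (1 / Gamma (real (delta_bar \<delta>) - \<delta>)) *
     integral {0..t} (\<lambda>s. (t - s) powr (real (delta_bar \<delta>) - \<delta> - 1) * tder (delta_bar \<delta>) (u x) s)"

definition caputo_exists :: "real \<Rightarrow> ('x \<Rightarrow> real \<Rightarrow> real) \<Rightarrow> 'x \<Rightarrow> real \<Rightarrow> bool" where
  "caputo_exists \<delta> u x t =
     ((\<forall>s\<in>{0<..<t}. tder_exists (delta_bar \<delta>) (u x) s) \<and>
      (\<lambda>s. (t - s) powr (real (delta_bar \<delta>) - \<delta> - 1) * tder (delta_bar \<delta>) (u x) s) integrable_on {0..t})"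

definition pdx :: "'n::finite \<Rightarrow> (real^'n \<Rightarrow> real) \<Rightarrow> real^'n \<Rightarrow> real" where
  "pdx i w x = deriv (\<lambda>h. w (x + h *\<^sub>R axis i 1)) 0"

definition pdx_exists :: "'n::finite \<Rightarrow> (real^'n \<Rightarrow> real) \<Rightarrow> real^'n \<Rightarrow> bool" where
  "pdx_exists i w x = ((\<lambda>h. w (x + h *\<^sub>R axis i 1)) differentiable (at 0))"

definition pdx2_exists :: "'n::finite \<Rightarrow> 'n \<Rightarrow> (real^'n \<Rightarrow> real) \<Rightarrow> real^'n \<Rightarrow> bool" where
  "pdx2_exists i j w x = ((\<forall>\<^sub>F y in nhds x. pdx_exists j w y) \<and> pdx_exists i (pdx j w) x)"

definition classical_solution ::
  "(real^'n::finite) set \<Rightarrow> real \<Rightarrow> real \<Rightarrow>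
   ('n \<Rightarrow> 'n \<Rightarrow> real^'n \<Rightarrow> real \<Rightarrow> real) \<Rightarrow> ('n \<Rightarrow> real^'n \<Rightarrow> real \<Rightarrow> real) \<Rightarrow>
   (real^'n \<Rightarrow> real \<Rightarrow> real) \<Rightarrow> (real^'n \<Rightarrow> real \<Rightarrow> real) \<Rightarrow> (real^'n \<Rightarrow> real \<Rightarrow> real) \<Rightarrow>
   (real^'n \<Rightarrow> real) \<Rightarrow> (real^'n \<Rightarrow> real) \<Rightarrow> (real^'n \<Rightarrow> real \<Rightarrow> real) \<Rightarrow> bool" where
  "classical_solution \<Omega> T \<delta> p q r f \<psi> \<phi>0 \<phi>1 u =
    (continuous_on (closure \<Omega> \<times> {0..T}) (\<lambda>(x, t). u x t) \<and>
     (\<forall>x\<in>\<Omega>. \<forall>t\<in>{0<..T}.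
        caputo_exists \<delta> u x t \<and>
        (\<forall>i. pdx_exists i (\<lambda>y. u y t) x) \<and>
        (\<forall>i j. pdx2_exists i j (\<lambda>y. u y t) x) \<and>
        caputo \<delta> u x t
          - (\<Sum>i\<in>UNIV. \<Sum>j\<in>UNIV. p i j x t * pdx i (pdx j (\<lambda>y. u y t)) x)
          + (\<Sum>i\<in>UNIV. q i x t * pdx i (\<lambda>y. u y t) x)
          + r x t * u x t = f x t) \<and>
     (\<forall>x\<in>frontier \<Omega>. \<forall>t\<in>{0<..T}. u x t = \<psi> x t) \<and>
     (\<forall>x\<in>closure \<Omega>. u x 0 = \<phi>0 x) \<and>
     (1 < \<delta> \<longrightarrow> (\<forall>x\<in>\<Omega>. ((\<lambda>s. u x s) has_real_derivative \<phi>1 x) (at 0 within {0..T}))))"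

definition uniformly_elliptic ::
  "(real^'n::finite) set \<Rightarrow> real \<Rightarrow> ('n \<Rightarrow> 'n \<Rightarrow> real^'n \<Rightarrow> real \<Rightarrow> real) \<Rightarrow> bool" where
  "uniformly_elliptic \<Omega> T p =
    (\<exists>lam>0. \<forall>x\<in>\<Omega>. \<forall>t\<in>{0<..T}. \<forall>\<xi>::real^'n.
        (\<Sum>i\<in>UNIV. \<Sum>j\<in>UNIV. p i j x t * \<xi>$i * \<xi>$j) \<ge> lam * (norm \<xi>)\<^sup>2)"

end

theory Submission
  imports Defs
begin

text \<open>The Caputo derivative is the Riemann--Liouville integral of order
  \<open>a = delta_bar \<delta> - \<delta> > 0\<close> of the time derivative \<open>\<partial>\<^sup>k u(x,\<cdot>)\<close>, \<open>k = delta_bar \<delta>\<close>.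
  That derivative is continuous, hence bounded by some \<open>M\<close>, on the compact closure of \<open>Q\<close>,
  so \<open>|D\<^sub>t\<^sup>\<delta> u(x,t)| \<le> M t\<^sup>a / \<Gamma>(a + 1)\<close>, which tends to \<open>0\<close> as \<open>t \<rightarrow> 0\<^sup>+\<close>.\<close>

lemma has_integral_powr_reflected:
  fixes t e :: real
  assumes "e > -1" "t \<ge> 0"
  shows "((\<lambda>s. (t - s) powr e) has_integral (t powr (e + 1) / (e + 1))) {0..t}"
proof -
  have "((\<lambda>s. s powr e) has_integral (t powr (e + 1) / (e + 1))) (cbox 0 t)"
    using has_integral_powr_from_0[OF assms] by simp
  from has_integral_affinity[OF this, of "-1" t]
  have "((\<lambda>s. (t - s) powr e) has_integral (t powr (e + 1) / (e + 1))) ((\<lambda>s. t - s) ` {0..t})"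
    by simp
  moreover have "(\<lambda>s::real. t - s) ` {0..t} = {0..t}"
    by (auto simp: image_iff intro!: bexI[where x="t - _"])
  ultimately show ?thesis by simp
qed

lemma norm_fractional_integral_le:
  fixes g :: "real \<Rightarrow> real" and a t M :: real
  assumes "0 < a" "0 \<le> t"
    and integrable: "(\<lambda>s. (t - s) powr (a - 1) * g s) integrable_on {0..t}"
    and bounded: "\<And>s. s \<in> {0<..<t} \<Longrightarrow> \<bar>g s\<bar> \<le> M"
  shows "norm (integral {0..t} (\<lambda>s. (t - s) powr (a - 1) * g s)) \<le> M * t powr a / a"
proof -
  let ?h = "\<lambda>s. (t - s) powr (a - 1) * g s"
  have kernel: "((\<lambda>s. M * (t - s) powr (a - 1)) has_integral M * t powr a / a) {0..t}"
    using has_integral_mult_right[OF has_integral_powr_reflected[of "a - 1" t]] assms by simp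
  have "norm (integral {0..t} ?h) = norm (integral {0<..<t} ?h)"
    by (simp add: integral_open_interval_real)
  also have "\<dots> \<le> integral {0<..<t} (\<lambda>s. M * (t - s) powr (a - 1))"
  proof (rule integral_norm_bound_integral)
    show "?h integrable_on {0<..<t}"
      using integrable integrable_on_open_interval_real by blast
    show "(\<lambda>s. M * (t - s) powr (a - 1)) integrable_on {0<..<t}"
      using kernel integrable_on_open_interval_real has_integral_integrable by blast
    fix s assume "s \<in> {0<..<t}"
    then show "norm (?h s) \<le> M * (t - s) powr (a - 1)"
      using bounded by (simp add: abs_mult mult.commute[of "(t - s) powr (a - 1)"] mult_right_mono)
  qed
  also have "\<dots> = M * t powr a / a"
    using kernel integral_unique has_integral_Icc_iff_Ioo by blast
  finally show ?thesis .
qed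

lemma norm_caputo_le:
  assumes "\<delta> < real (delta_bar \<delta>)" "0 \<le> t"
    and "caputo_exists \<delta> u x t"
    and "\<And>s. s \<in> {0<..<t} \<Longrightarrow> \<bar>tder (delta_bar \<delta>) (u x) s\<bar> \<le> M"
  shows "norm (caputo \<delta> u x t) \<le>
    M * t powr (real (delta_bar \<delta>) - \<delta>) / (Gamma (real (delta_bar \<delta>) - \<delta>) * (real (delta_bar \<delta>) - \<delta>))"
proof -
  define a where "a = real (delta_bar \<delta>) - \<delta>"
  have "Gamma a > 0"
    using assms(1) Gamma_real_pos by (simp add: a_def)
  have "norm (integral {0..t} (\<lambda>s. (t - s) powr (a - 1) * tder (delta_bar \<delta>) (u x) s))
      \<le> M * t powr a / a"
    using assms by (intro norm_fractional_integral_le) (auto simp: a_def caputo_exists_def)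
  then have "norm (caputo \<delta> u x t) \<le> M * t powr a / a / Gamma a"
    unfolding caputo_def a_def[symmetric] using \<open>Gamma a > 0\<close>
    by (simp add: divide_right_mono del: divide_divide_eq_left)
  then show ?thesis
    by (simp add: a_def mult.commute)
qed

lemma tendsto_powr_at_right_0:
  fixes a :: real
  assumes "0 < a"
  shows "((\<lambda>t. C * t powr a) \<longlongrightarrow> 0) (at_right 0)"
proof -
  have "((\<lambda>t::real. t powr a) \<longlongrightarrow> 0) (at_right 0)"
    by (rule tendsto_zero_powrI)
      (use assms in \<open>auto simp: eventually_at_right_field intro!: exI[of _ 1] tendsto_ident_at\<close>)
  then show ?thesis
    using tendsto_mult_right_zero by blast
qed

lemma caputo_tendsto_0_at_right_0:
  assumes "\<delta> < real (delta_bar \<delta>)" "0 < T"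
    and exists: "\<And>t. t \<in> {0<..<T} \<Longrightarrow> caputo_exists \<delta> u x t"
    and bounded: "\<And>s. s \<in> {0<..<T} \<Longrightarrow> \<bar>tder (delta_bar \<delta>) (u x) s\<bar> \<le> M"
  shows "((\<lambda>t. caputo \<delta> u x t) \<longlongrightarrow> 0) (at_right 0)"
proof (rule Lim_null_comparison)
  define a where "a = real (delta_bar \<delta>) - \<delta>"
  have "0 < a"
    using assms(1) by (simp add: a_def)
  show "\<forall>\<^sub>F t in at_right 0. norm (caputo \<delta> u x t) \<le> M / (Gamma a * a) * t powr a"
    unfolding eventually_at_right_field
  proof (intro exI[of _ T] conjI allI impI)
    fix t assume "0 < t" "t < T"
    then have "norm (caputo \<delta> u x t) \<le> M * t powr a / (Gamma a * a)"
      using \<open>0 < a\<close> unfolding a_def by (intro norm_caputo_le exists bounded) auto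
    then show "norm (caputo \<delta> u x t) \<le> M / (Gamma a * a) * t powr a"
      by simp
  qed (use assms in auto)
  show "((\<lambda>t. M / (Gamma a * a) * t powr a) \<longlongrightarrow> 0) (at_right 0)"
    using tendsto_powr_at_right_0[OF \<open>0 < a\<close>] .
qed

theorem corollary2p2:
  fixes \<Omega> :: "(real^'n::finite) set" and T \<delta> :: real
    and p :: "'n \<Rightarrow> 'n \<Rightarrow> real^'n \<Rightarrow> real \<Rightarrow> real" and q :: "'n \<Rightarrow> real^'n \<Rightarrow> real \<Rightarrow> real"
    and r f \<psi> u :: "real^'n \<Rightarrow> real \<Rightarrow> real" and \<phi>0 \<phi>1 :: "real^'n \<Rightarrow> real"
  assumes dom: "open \<Omega>" "connected \<Omega>" "bounded \<Omega>" "\<Omega> \<noteq> {}"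
    and T: "T > 0"
    and delta: "(0 < \<delta> \<and> \<delta> < 1) \<or> (1 < \<delta> \<and> \<delta> < 2)"
    and ell: "uniformly_elliptic \<Omega> T p"
    and cont_p: "\<And>i j. continuous_on (closure \<Omega> \<times> {0..T}) (\<lambda>(x, t). p i j x t)"
    and cont_q: "\<And>i. continuous_on (closure \<Omega> \<times> {0..T}) (\<lambda>(x, t). q i x t)"
    and cont_r: "continuous_on (closure \<Omega> \<times> {0..T}) (\<lambda>(x, t). r x t)"
    and cont_psi: "continuous_on (frontier \<Omega> \<times> {0..T}) (\<lambda>(x, t). \<psi> x t)"
    and cont_phi0: "continuous_on (closure \<Omega>) \<phi>0"
    and cont_phi1: "1 < \<delta> \<Longrightarrow> continuous_on (closure \<Omega>) \<phi>1"
    and compat: "\<And>x. x \<in> frontier \<Omega> \<Longrightarrow> \<phi>0 x = \<psi> x 0"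
    and sol: "classical_solution \<Omega> T \<delta> p q r f \<psi> \<phi>0 \<phi>1 u"
    and cont_dt: "\<exists>v. continuous_on (closure \<Omega> \<times> {0..T}) v \<and>
                      (\<forall>x\<in>\<Omega>. \<forall>t\<in>{0<..<T}. v (x, t) = tder (delta_bar \<delta>) (u x) t)"
  shows "\<forall>x\<in>\<Omega>. ((\<lambda>t. caputo \<delta> u x t) \<longlongrightarrow> 0) (at_right 0)"
proof
  fix x assume "x \<in> \<Omega>"
  obtain v where v_cont: "continuous_on (closure \<Omega> \<times> {0..T}) v"
    and v_eq: "\<forall>x\<in>\<Omega>. \<forall>t\<in>{0<..<T}. v (x, t) = tder (delta_bar \<delta>) (u x) t"
    using cont_dt by blast
  have "compact (closure \<Omega> \<times> {0..T})"
    using dom(3) by (intro compact_Times) (auto simp: compact_closure)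
  then obtain M where M: "\<And>y. y \<in> closure \<Omega> \<times> {0..T} \<Longrightarrow> norm (v y) \<le> M"
    using v_cont compact_continuous_image compact_imp_bounded by (metis bounded_iff imageI)
  have "\<delta> < real (delta_bar \<delta>)"
    using delta by (auto simp: delta_bar_def)
  then show "((\<lambda>t. caputo \<delta> u x t) \<longlongrightarrow> 0) (at_right 0)"
  proof (rule caputo_tendsto_0_at_right_0[OF _ T])
    show "caputo_exists \<delta> u x t" if "t \<in> {0<..<T}" for t
      using sol \<open>x \<in> \<Omega>\<close> that by (auto simp: classical_solution_def)
    show "\<bar>tder (delta_bar \<delta>) (u x) s\<bar> \<le> M" if "s \<in> {0<..<T}" for s
      using M[of "(x, s)"] v_eq \<open>x \<in> \<Omega>\<close> that closure_subset by auto
  qed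
qed

end
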